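(* Let $x,y \in \mathbb{N}$, let $S$ be a finite set of functions $f_i(z) = a_i z + b_i$ ($1 \le i \le N$) with $a_i, b_i \in \mathbb{Z}$ and $a_i > 0$, let $k > 0$ be an integer and $g(z) = z - k$, and put $F = S \cup \{g\}$. Then $x \xrightarrow{F}_+ y$ if and only if there exists $z \in \mathbb{Z}$ with $z \ge y$, $z \equiv y \pmod k$, and $x \xrightarrow{S}_+ z$.
   Context: $\mathbb{N} = \{0,1,2,\dots\}$. For a set $S$ of affine functions $\mathbb{Z}\to\mathbb{Z}$, an $S$-composition is a finite tuple $(s_1,\dots,s_K)$ with $K \ge 0$ and each $s_i \in S$, identified with the function $s_K \circ \dots \circ s_1$. Its orbit at $x$ is $\{x, s_1(x), (s_2\circ s_1)(x), \dots, (s_K\circ\dots\circ s_1)(x)\}$. The composition is valid with respect to $x$ if every element of its orbit at $x$ is nonnegative. We write $x \xrightarrow{S}_+ y$ if there is an $S$-composition $G$ valid with respect to $x$ with $G(x) = y$. *)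

theory Defs
  imports Main "HOL-Number_Theory.Cong"
begin

text \<open>An S-composition is a list (s_1,...,s_K) of elements of S; it denotes s_K o ... o s_1.
  Applying it to x means applying s_1 first.\<close>

definition comp_apply :: "(int \<Rightarrow> int) list \<Rightarrow> int \<Rightarrow> int" where
  "comp_apply fs x = fold (\<lambda>f z. f z) fs x"

definition orbit :: "(int \<Rightarrow> int) list \<Rightarrow> int \<Rightarrow> int set" where
  "orbit fs x = {comp_apply (take i fs) x | i. i \<le> length fs}"

definition valid_comp :: "(int \<Rightarrow> int) list \<Rightarrow> int \<Rightarrow> bool" where
  "valid_comp fs x \<longleftrightarrow> (\<forall>v \<in> orbit fs x. v \<ge> 0)"

definition reach_pos :: "(int \<Rightarrow> int) set \<Rightarrow> int \<Rightarrow> int \<Rightarrow> bool" where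
  "reach_pos S x y \<longleftrightarrow> (\<exists>fs. set fs \<subseteq> S \<and> valid_comp fs x \<and> comp_apply fs x = y)"

end

theory Submission
  imports Defs
begin

text \<open>Every decrement can be postponed to the end of a path: if a value is shifted up by
  \<open>m k\<close> with \<open>m \<ge> 0\<close>, applying \<open>z \<mapsto> a z + b\<close> with \<open>a > 0\<close> keeps it shifted up by
  \<open>(a m) k\<close>, so it stays nonnegative. Hence an \<open>F\<close>-path to \<open>y\<close> yields an \<open>S\<close>-path to
  \<open>y + m k\<close>, and conversely an \<open>S\<close>-path to \<open>z \<ge> y\<close> with \<open>z \<equiv> y\<close> extends by
  \<open>(z - y)/k\<close> decrements, which only pass through values \<open>\<ge> y \<ge> 0\<close>.\<close>

lemma comp_apply_Nil [simp]: "comp_apply [] x = x"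
  by (simp add: comp_apply_def)

lemma comp_apply_snoc [simp]: "comp_apply (fs @ [f]) x = f (comp_apply fs x)"
  by (simp add: comp_apply_def)

lemma orbit_eq_image: "orbit fs x = (\<lambda>i. comp_apply (take i fs) x) ` {..length fs}"
  by (auto simp: orbit_def)

lemma orbit_snoc: "orbit (fs @ [f]) x = insert (f (comp_apply fs x)) (orbit fs x)"
proof -
  have "(\<lambda>i. comp_apply (take i (fs @ [f])) x) ` {..length fs}
      = (\<lambda>i. comp_apply (take i fs) x) ` {..length fs}"
    by (rule image_cong) auto
  then show ?thesis
    by (simp add: orbit_eq_image atMost_Suc)
qed

lemma valid_comp_Nil [simp]: "valid_comp [] x \<longleftrightarrow> x \<ge> 0"
  by (simp add: valid_comp_def orbit_def)

lemma valid_comp_snoc [simp]: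
  "valid_comp (fs @ [f]) x \<longleftrightarrow> valid_comp fs x \<and> f (comp_apply fs x) \<ge> 0"
  by (auto simp: valid_comp_def orbit_snoc)

lemma reach_pos_refl: "x \<ge> 0 \<Longrightarrow> reach_pos T x x"
  unfolding reach_pos_def by (rule exI[of _ "[]"]) simp

lemma reach_pos_start_nonneg: "reach_pos T x y \<Longrightarrow> x \<ge> 0"
  by (force simp: reach_pos_def valid_comp_def orbit_def)

lemma reach_pos_step:
  assumes "reach_pos T x y" "f \<in> T" "f y \<ge> 0"
  shows "reach_pos T x (f y)"
proof -
  from assms(1) obtain fs where "set fs \<subseteq> T" "valid_comp fs x" "comp_apply fs x = y"
    by (auto simp: reach_pos_def)
  with assms(2,3) show ?thesis
    unfolding reach_pos_def by (intro exI[of _ "fs @ [f]"]) auto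
qed

lemma reach_pos_induct [consumes 1, case_names refl step]:
  assumes "reach_pos T x y"
    and refl: "P x"
    and step: "\<And>y f. reach_pos T x y \<Longrightarrow> P y \<Longrightarrow> f \<in> T \<Longrightarrow> f y \<ge> 0 \<Longrightarrow> P (f y)"
  shows "P y"
proof -
  from assms(1) obtain fs where fs: "set fs \<subseteq> T" "valid_comp fs x" "comp_apply fs x = y"
    by (auto simp: reach_pos_def)
  have "reach_pos T x (comp_apply fs x) \<and> P (comp_apply fs x)"
    using fs(1,2)
  proof (induction fs rule: rev_induct)
    case Nil
    then show ?case using refl reach_pos_refl by simp
  next
    case (snoc f fs)
    then show ?case using step reach_pos_step by simp
  qed
  with fs(3) show ?thesis by simp
qed

lemma reach_pos_mono: "reach_pos S x y \<Longrightarrow> S \<subseteq> T \<Longrightarrow> reach_pos T x y"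
  unfolding reach_pos_def by blast

lemma reach_pos_decrements:
  assumes "reach_pos T x (y + int n * k)" "(\<lambda>z. z - k) \<in> T" "k > 0" "y \<ge> 0"
  shows "reach_pos T x y"
  using assms(1)
proof (induction n)
  case (Suc n)
  have "0 \<le> int n * k" using \<open>k > 0\<close> by simp
  with Suc.prems have "reach_pos T x (y + int (Suc n) * k - k)"
    using assms(2,4) by (intro reach_pos_step[where f = "\<lambda>z. z - k"]) (auto simp: algebra_simps)
  then show ?case
    using Suc.IH by (simp add: algebra_simps)
qed simp

lemma reach_pos_postpone_decrements:
  assumes affine: "\<forall>f \<in> S. \<exists>a b. a > 0 \<and> f = (\<lambda>z. a * z + b)" and "k > 0"
    and "reach_pos (insert (\<lambda>z. z - k) S) x y"
  shows "\<exists>m \<ge> 0. reach_pos S x (y + m * k)"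
  using assms(3)
proof (induction rule: reach_pos_induct)
  case refl
  have "reach_pos S x x"
    using assms(3) by (intro reach_pos_refl reach_pos_start_nonneg)
  then show ?case by force
next
  case (step y f)
  then obtain m where m: "m \<ge> 0" "reach_pos S x (y + m * k)" by blast
  from \<open>f \<in> insert (\<lambda>z. z - k) S\<close> consider "f = (\<lambda>z. z - k)" | "f \<in> S" by blast
  then show ?case
  proof cases
    case 1
    with m show ?thesis
      by (intro exI[of _ "m + 1"]) (simp add: algebra_simps)
  next
    case 2
    then obtain a b where ab: "a > 0" "f = (\<lambda>z. a * z + b)" using affine by blast
    then have shift: "f (y + m * k) = f y + (a * m) * k"
      by (simp add: algebra_simps)
    have "0 \<le> a * m" using ab m by simp
    with \<open>k > 0\<close> have "0 \<le> f (y + m * k)"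
      using shift \<open>0 \<le> f y\<close> by (simp add: add_nonneg_nonneg)
    with m(2) 2 have "reach_pos S x (f (y + m * k))"
      by (rule reach_pos_step)
    then have "reach_pos S x (f y + (a * m) * k)"
      by (simp only: shift)
    with \<open>0 \<le> a * m\<close> show ?thesis by blast
  qed
qed

theorem mainTheorem11:
  fixes x y k :: int and S :: "(int \<Rightarrow> int) set"
  assumes "x \<ge> 0" and "y \<ge> 0"
    and "finite S"
    and "\<forall>f \<in> S. \<exists>a b. a > 0 \<and> f = (\<lambda>z. a * z + b)"
    and "k > 0"
  shows "reach_pos (insert (\<lambda>z. z - k) S) x y \<longleftrightarrow>
         (\<exists>z. z \<ge> y \<and> [z = y] (mod k) \<and> reach_pos S x z)"
proof
  assume "reach_pos (insert (\<lambda>z. z - k) S) x y"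
  then obtain m where "m \<ge> 0" "reach_pos S x (y + m * k)"
    using reach_pos_postpone_decrements assms(4,5) by blast
  moreover have "[y + m * k = y] (mod k)" by (simp add: cong_def)
  ultimately show "\<exists>z. z \<ge> y \<and> [z = y] (mod k) \<and> reach_pos S x z"
    using \<open>k > 0\<close> by (intro exI[of _ "y + m * k"]) simp
next
  assume "\<exists>z. z \<ge> y \<and> [z = y] (mod k) \<and> reach_pos S x z"
  then obtain z where z: "z \<ge> y" "[z = y] (mod k)" "reach_pos S x z" by blast
  from z(2) have "k dvd z - y" by (simp add: cong_iff_dvd_diff)
  then obtain q where "z - y = k * q" ..
  then have q: "z = y + k * q" by simp
  have "q \<ge> 0" using q z(1) \<open>k > 0\<close> by (simp add: zero_le_mult_iff)
  with q z(3) have "reach_pos (insert (\<lambda>z. z - k) S) x (y + int (nat q) * k)"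
    by (auto simp: mult.commute intro: reach_pos_mono)
  then show "reach_pos (insert (\<lambda>z. z - k) S) x y"
    by (rule reach_pos_decrements[OF _ insertI1 assms(5,2)])
qed

end
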